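(* Let $f:\mathbb{C}\to\mathbb{C}$ be a transcendental entire function, regarded as a continuous open-dense defined map $f:\mathbb{P}^1\dashrightarrow\mathbb{P}^1$ with domain $\mathbb{C}$, and let $\infty$ denote the point at infinity. Let $\mu_X$ be the positive strong submeasure $\mu_X(\varphi)=\max_{\mathbb{P}^1}\varphi$. Then $f_*(\delta_\infty)=\mu_X$ and $f_*(\mu_X)=\mu_X$. More generally, if $\mu=\mu_0+a\delta_\infty$ is a finite positive Borel measure on $\mathbb{P}^1$ with $\mu_0(\{\infty\})=0$ and $a\ge0$, then $f_*(\mu)(\varphi)=\int_{\mathbb{C}}\varphi\circ f\,d\mu_0+a\max_{\mathbb{P}^1}\varphi$ for all $\varphi\in C^0(\mathbb{P}^1)$, i.e. $f_*(\mu)=f_*(\mu_0)+a\mu_X$.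
   Context: For a continuous open-dense defined map $f$ (a continuous map defined on an open dense subset $U$ of a compact metric space $X$, here $U=\mathbb{C}\subset X=\mathbb{P}^1$) and $\varphi\in C^0(X)$, $f^*(\varphi)=E(\varphi\circ f)$, equal to $\varphi\circ f$ on $U$ and to $\limsup_{y\in U,y\to x}\varphi(f(y))$ for $x\notin U$. For a positive strong submeasure $\mu$ (sub-linear, bounded, non-decreasing map $C^0(X)\to\mathbb{R}$, e.g. a finite positive Borel measure), $f_*(\mu)(\varphi)=\inf\{\mu(\psi):\psi\in C^0(X),\psi\ge f^*(\varphi)\}$. *)

theory Defs
  imports "HOL-Probability.Probability"
begin

text \<open>The Riemann sphere P^1 is modelled as the unit sphere S2 in R^3,
  with the point at infinity the north pole; C is embedded by inverse
  stereographic projection sph, with inverse chart on S2 - {north}.\<close>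

type_synonym R3 = "real \<times> real \<times> real"

definition S2 :: "R3 set" where
  "S2 = sphere 0 1"

definition north :: R3 where
  "north = (0, 0, 1)"

definition sph :: "complex \<Rightarrow> R3" where
  "sph z = (2 * Re z / (1 + (cmod z)\<^sup>2), 2 * Im z / (1 + (cmod z)\<^sup>2),
            ((cmod z)\<^sup>2 - 1) / ((cmod z)\<^sup>2 + 1))"

definition chart :: "R3 \<Rightarrow> complex" where
  "chart p = Complex (fst p) (fst (snd p)) / complex_of_real (1 - snd (snd p))"

definition pullback :: "(complex \<Rightarrow> complex) \<Rightarrow> (R3 \<Rightarrow> real) \<Rightarrow> R3 \<Rightarrow> real" where
  "pullback f \<phi> x =
     (if x = north
      then real_of_ereal (Limsup (at north within (S2 - {north}))
                                 (\<lambda>y. ereal (\<phi> (sph (f (chart y))))))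
      else \<phi> (sph (f (chart x))))"

definition pushforward :: "((R3 \<Rightarrow> real) \<Rightarrow> real) \<Rightarrow> (complex \<Rightarrow> complex) \<Rightarrow> (R3 \<Rightarrow> real) \<Rightarrow> real" where
  "pushforward \<mu> f \<phi> =
     Inf {\<mu> \<psi> | \<psi>. continuous_on S2 \<psi> \<and> (\<forall>x\<in>S2. pullback f \<phi> x \<le> \<psi> x)}"

definition muX :: "(R3 \<Rightarrow> real) \<Rightarrow> real" where
  "muX \<phi> = Sup (\<phi> ` S2)"

definition borelS2 :: "R3 measure" where
  "borelS2 = restrict_space borel S2"

definition transcendental_entire :: "(complex \<Rightarrow> complex) \<Rightarrow> bool" where
  "transcendental_entire f \<longleftrightarrow> f holomorphic_on UNIV \<and> \<not> (\<exists>p. \<forall>z. f z = poly p z)"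

end

theory Submission
  imports Defs "HOL-Complex_Analysis.Great_Picard"
begin

text \<open>By Casorati--Weierstrass at the essential singularity \<open>\<infinity>\<close>, near \<open>\<infinity>\<close> the transcendental
  entire function f comes arbitrarily close to every value, so the limsup defining \<open>f\<^sup>*\<phi>\<close>
  at \<open>\<infinity>\<close> is \<open>max \<phi>\<close>: the function \<open>f\<^sup>*\<phi>\<close>, continuous off \<open>\<infinity>\<close>, attains its maximum at \<open>\<infinity>\<close>.
  Interpolating between \<open>f\<^sup>*\<phi>\<close> and \<open>max \<phi>\<close> with cutoffs shrinking to \<open>\<infinity>\<close> gives continuous
  majorants converging pointwise to \<open>f\<^sup>*\<phi>\<close>, so by dominated convergence the infimum of
  \<open>\<integral>\<psi> d\<mu>\<close> over continuous majorants \<open>\<psi>\<close> of \<open>f\<^sup>*\<phi>\<close> is \<open>\<integral>f\<^sup>*\<phi> d\<mu>\<close>, which for \<open>\<mu> = \<mu>\<^sub>0 + a\<delta>\<^sub>\<infinity>\<close>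
  is \<open>\<integral>\<^sub>\<complex> \<phi>\<circ>f d\<mu>\<^sub>0 + a max \<phi>\<close>. For \<open>\<delta>\<^sub>\<infinity>\<close> and \<open>\<mu>\<^sub>X\<close> every majorant is at least \<open>max \<phi>\<close> at \<open>\<infinity>\<close>,
  and the constant \<open>max \<phi>\<close> is a majorant.\<close>

lemma borel_measurable_continuous_off_point:
  fixes G :: "'a::metric_space \<Rightarrow> 'b::metric_space"
  assumes "S \<in> sets borel" "continuous_on (S - {p}) G"
  shows "G \<in> borel_measurable (restrict_space borel S)"
proof -
  have "(\<lambda>x. if x = p then G p else G x) \<in> borel_measurable (restrict_space borel S)"
  proof (subst measurable_If_restrict_space_iff)
    show "{x \<in> space (restrict_space borel S). x = p} \<in> sets (restrict_space borel S)"
      by (auto simp: sets_restrict_space space_restrict_space intro!: image_eqI[of _ _ "{p}"])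
    have "{x. x \<noteq> p} = - {p}" by auto
    then have "restrict_space (restrict_space borel S) {x. x \<noteq> p} = restrict_space borel (S - {p})"
      using assms(1) by (simp add: restrict_restrict_space Diff_eq)
    then show "(\<lambda>x. G p) \<in> borel_measurable (restrict_space (restrict_space borel S) {x. x = p}) \<and>
        G \<in> borel_measurable (restrict_space (restrict_space borel S) {x. x \<noteq> p})"
      using borel_measurable_continuous_on_restrict[OF assms(2)] by simp
  qed
  moreover have "(\<lambda>x. if x = p then G p else G x) = G"
    by auto
  ultimately show ?thesis
    by simp
qed

lemma continuous_on_interpolate_near_point:
  fixes G :: "'a::metric_space \<Rightarrow> real"
  assumes S: "closed S" and G: "continuous_on (S - {p}) G" and t: "continuous_on S t"
    and r: "r > 0" and near: "\<And>x. x \<in> S \<Longrightarrow> dist x p \<le> r \<Longrightarrow> t x = 1"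
  shows "continuous_on S (\<lambda>x. (1 - t x) * G x + t x * c)"
proof -
  define A where "A = S \<inter> {x. r \<le> dist x p}"
  define C where "C = S \<inter> cball p r"
  have "continuous_on A (\<lambda>x. (1 - t x) * G x + t x * c)"
    using r by (intro continuous_intros continuous_on_subset[OF t] continuous_on_subset[OF G])
      (auto simp: A_def)
  moreover have "continuous_on C (\<lambda>x. (1 - t x) * G x + t x * c)"
    using near by (intro continuous_on_cong[THEN iffD1, OF refl _ continuous_on_const[of C c]])
      (simp add: C_def dist_commute)
  moreover have "closed A" "closed C"
    unfolding A_def C_def by (intro closed_Int S closed_Collect_le closed_cball continuous_intros)+
  moreover have "A \<union> C = S"
    by (auto simp: A_def C_def dist_commute)
  ultimately show ?thesis
    using continuous_on_closed_Un by metis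
qed

lemma continuous_majorants_converging:
  fixes G :: "'a::metric_space \<Rightarrow> real"
  assumes S: "closed S" and G: "continuous_on (S - {p}) G" "\<And>x. x \<in> S \<Longrightarrow> G x \<le> G p"
  obtains \<psi> where "\<And>n. continuous_on S (\<psi> n)" "\<And>n x. x \<in> S \<Longrightarrow> G x \<le> \<psi> n x"
    "\<And>n x. x \<in> S \<Longrightarrow> \<psi> n x \<le> G p" "\<And>x. (\<lambda>n. \<psi> n x) \<longlonglongrightarrow> G x"
proof
  define t where "t n x = max 0 (min 1 (2 - (real n + 1) * dist x p))" for n x
  define \<psi> where "\<psi> n x = (1 - t n x) * G x + t n x * G p" for n x
  have t01: "0 \<le> t n x" "t n x \<le> 1" for n x
    by (simp_all add: t_def)
  show "G x \<le> \<psi> n x" "\<psi> n x \<le> G p" if "x \<in> S" for n x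
    using mult_left_mono[OF G(2)[OF that] t01(1)] mult_left_mono[OF G(2)[OF that], of "1 - t n x"] t01(2)
    by (simp_all add: \<psi>_def algebra_simps)
  show "continuous_on S (\<psi> n)" for n
    unfolding \<psi>_def
  proof (rule continuous_on_interpolate_near_point[OF S G(1)])
    show "continuous_on S (t n)"
      unfolding t_def by (intro continuous_intros)
    show "t n x = 1" if "dist x p \<le> 1 / (real n + 1)" for x
      using that by (simp add: t_def field_simps)
  qed simp
  show "(\<lambda>n. \<psi> n x) \<longlonglongrightarrow> G x" for x
  proof (cases "x = p")
    case True
    then show ?thesis by (simp add: \<psi>_def t_def)
  next
    case False
    then have d: "dist x p > 0" by simp
    obtain N :: nat where N: "2 / dist x p \<le> real N"
      using real_arch_simple by blast
    have "t n x = 0" if "n \<ge> N" for n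
    proof -
      have "2 / dist x p \<le> real n + 1"
        using N that by linarith
      then have "2 \<le> (real n + 1) * dist x p"
        using d by (simp add: divide_le_eq)
      then show ?thesis by (simp add: t_def)
    qed
    then have "\<forall>\<^sub>F n in sequentially. \<psi> n x = G x"
      unfolding eventually_sequentially \<psi>_def by force
    then show ?thesis
      by (rule tendsto_eventually)
  qed
qed

lemma Inf_eq_limit_of_members:
  fixes I :: "real set"
  assumes lower: "\<And>s. s \<in> I \<Longrightarrow> l \<le> s" and mem: "\<And>n. x n \<in> I" and lim: "x \<longlonglongrightarrow> l"
  shows "Inf I = l"
proof (rule antisym)
  have "Inf I \<le> x n" for n
    using lower by (intro cInf_lower mem bdd_belowI)
  then show "Inf I \<le> l"
    using lim by (intro LIMSEQ_le_const) auto
  show "l \<le> Inf I"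
    using mem[of 0] lower by (intro cInf_greatest) auto
qed

lemma integrable_continuous_on_compact:
  fixes \<phi> :: "'a::metric_space \<Rightarrow> real"
  assumes M: "finite_measure M" "sets M = sets (restrict_space borel S)"
    and S: "compact S" and \<phi>: "continuous_on S \<phi>"
  shows "integrable M \<phi>"
proof -
  obtain B where B: "\<And>x. x \<in> S \<Longrightarrow> norm (\<phi> x) \<le> B"
    using compact_imp_bounded[OF compact_continuous_image[OF \<phi> S]] by (auto simp: bounded_iff)
  have "\<phi> \<in> borel_measurable M"
    using borel_measurable_continuous_on_restrict[OF \<phi>] by (subst measurable_cong_sets[OF M(2) refl])
  then show ?thesis
    using B sets_eq_imp_space_eq[OF M(2)]
    by (intro finite_measure.integrable_const_bound[OF M(1), where B=B] AE_I2) (auto simp: space_restrict_space)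
qed

lemma Inf_integral_continuous_majorants:
  fixes G :: "'a::metric_space \<Rightarrow> real"
  assumes S: "compact S" "p \<in> S"
    and M: "finite_measure M" "sets M = sets (restrict_space borel S)"
    and G: "continuous_on (S - {p}) G" "\<And>x. x \<in> S \<Longrightarrow> G x \<le> G p" "bdd_below (G ` S)"
  shows "Inf {integral\<^sup>L M \<psi> | \<psi>. continuous_on S \<psi> \<and> (\<forall>x\<in>S. G x \<le> \<psi> x)} = integral\<^sup>L M G"
    (is "Inf ?I = _")
proof -
  have space: "space M = S"
    using sets_eq_imp_space_eq[OF M(2)] by (simp add: space_restrict_space)
  have mG: "G \<in> borel_measurable M"
    using S(1) G(1) borel_measurable_continuous_off_point[of S p G]
    by (subst measurable_cong_sets[OF M(2) refl]) (auto simp: compact_imp_closed)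
  obtain \<psi> where \<psi>: "\<And>n. continuous_on S (\<psi> n)" "\<And>n x. x \<in> S \<Longrightarrow> G x \<le> \<psi> n x"
    "\<And>n x. x \<in> S \<Longrightarrow> \<psi> n x \<le> G p" "\<And>x. (\<lambda>n. \<psi> n x) \<longlonglongrightarrow> G x"
    using continuous_majorants_converging[OF compact_imp_closed[OF S(1)] G(1,2)] by blast
  obtain L where L: "\<And>x. x \<in> S \<Longrightarrow> L \<le> G x"
    using G(3) by (auto simp: bdd_below_def)
  have "norm (\<psi> n x) \<le> max \<bar>L\<bar> \<bar>G p\<bar>" if "x \<in> S" for n x
    using L[OF that] \<psi>(2,3)[OF that, of n] by auto
  then have dominated: "integrable M (\<lambda>_. max \<bar>L\<bar> \<bar>G p\<bar>)"
    "AE x in M. (\<lambda>n. \<psi> n x) \<longlonglongrightarrow> G x" "\<And>n. AE x in M. norm (\<psi> n x) \<le> max \<bar>L\<bar> \<bar>G p\<bar>"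
    using \<psi>(4) by (auto simp: space intro: AE_I2 finite_measure.integrable_const[OF M(1)])
  have m\<psi>: "\<psi> n \<in> borel_measurable M" for n
    using integrable_continuous_on_compact[OF M S(1) \<psi>(1)] by simp
  have iG: "integrable M G"
    by (rule integrable_dominated_convergence[OF mG m\<psi> dominated])
  show ?thesis
  proof (rule Inf_eq_limit_of_members)
    show "integral\<^sup>L M G \<le> s" if "s \<in> ?I" for s
      using that integrable_continuous_on_compact[OF M S(1)]
      by (auto simp: space intro!: integral_mono[OF iG])
    show "integral\<^sup>L M (\<psi> n) \<in> ?I" for n
      using \<psi>(1,2) by blast
    show "(\<lambda>n. integral\<^sup>L M (\<psi> n)) \<longlonglongrightarrow> integral\<^sup>L M G"
      by (rule integral_dominated_convergence[OF mG m\<psi> dominated])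
  qed
qed

lemma nn_integral_add_point_mass:
  assumes sets: "sets M = sets N" and p: "p \<in> space N"
    and M: "\<And>A. A \<in> sets N \<Longrightarrow> emeasure M A = emeasure N A + c * indicator A p"
    and u: "u \<in> borel_measurable N"
  shows "(\<integral>\<^sup>+x. u x \<partial>M) = (\<integral>\<^sup>+x. u x \<partial>N) + c * u p"
  using u
proof (induct rule: borel_measurable_induct)
  case (cong f g)
  have "space M = space N"
    using sets_eq_imp_space_eq[OF sets] .
  then have "(\<integral>\<^sup>+x. f x \<partial>M) = (\<integral>\<^sup>+x. g x \<partial>M)" "(\<integral>\<^sup>+x. f x \<partial>N) = (\<integral>\<^sup>+x. g x \<partial>N)"
    using cong(3) by (auto intro!: nn_integral_cong)
  with cong(3,4) p show ?case
    by simp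
next
  case (set A)
  then show ?case
    using M sets by simp
next
  case (mult u c')
  have "u \<in> borel_measurable M"
    using mult(2) by (subst measurable_cong_sets[OF sets refl])
  with mult show ?case
    by (simp add: nn_integral_cmult distrib_left mult_ac)
next
  case (add u v)
  have "u \<in> borel_measurable M"
    using add(1) by (subst measurable_cong_sets[OF sets refl])
  moreover have "v \<in> borel_measurable M"
    using add(4) by (subst measurable_cong_sets[OF sets refl])
  ultimately show ?case
    using add by (simp add: nn_integral_add add_ac distrib_left)
next
  case (seq U)
  have mU: "U i \<in> borel_measurable M" for i
    using seq(1) by (subst measurable_cong_sets[OF sets refl])
  have "incseq (\<lambda>i. \<integral>\<^sup>+x. U i x \<partial>N)" "incseq (\<lambda>i. c * U i p)"
    using seq(4) by (auto simp: incseq_def le_fun_def intro!: nn_integral_mono mult_left_mono)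
  then have "(SUP i. (\<integral>\<^sup>+x. U i x \<partial>N) + c * U i p) = (SUP i. \<integral>\<^sup>+x. U i x \<partial>N) + (SUP i. c * U i p)"
    by (rule ennreal_SUP_add)
  then show ?case
    using seq(3) by (simp only: SUP_apply nn_integral_monotone_convergence_SUP[OF seq(4) mU]
        nn_integral_monotone_convergence_SUP[OF seq(4) seq(1)] SUP_mult_left_ennreal)
qed

lemma integral_add_point_mass:
  fixes u :: "'a \<Rightarrow> real"
  assumes sets: "sets M = sets N" and p: "p \<in> space N" and a: "a \<ge> 0"
    and M: "\<And>A. A \<in> sets N \<Longrightarrow> emeasure M A = emeasure N A + ennreal a * indicator A p"
    and u: "integrable N u"
  shows "integral\<^sup>L M u = integral\<^sup>L N u + a * u p"
proof -
  have mu: "u \<in> borel_measurable N"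
    using u by simp
  have nn: "(\<integral>\<^sup>+x. ennreal (f x) \<partial>M) = (\<integral>\<^sup>+x. ennreal (f x) \<partial>N) + ennreal (a * max 0 (f p))"
    if "f \<in> borel_measurable N" for f
  proof -
    have "ennreal a * ennreal (f p) = ennreal (a * max 0 (f p))"
      by (metis a ennreal_max_0 ennreal_mult max.cobounded1)
    then show ?thesis
      using nn_integral_add_point_mass[OF sets p M] that by simp
  qed
  have "(\<integral>\<^sup>+x. norm (u x) \<partial>M) < \<infinity>"
    using nn[of "\<lambda>x. norm (u x)"] u[unfolded integrable_iff_bounded] mu
    by (simp add: ennreal_add_eq_top top.not_eq_extremum[symmetric])
  then have uM: "integrable M u"
    using mu by (subst integrable_iff_bounded) (simp add: measurable_cong_sets[OF sets refl])
  have finite: "(\<integral>\<^sup>+x. ennreal (u x) \<partial>N) < \<infinity>" "(\<integral>\<^sup>+x. ennreal (- u x) \<partial>N) < \<infinity>"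
    using integrableD(2,3)[OF u] by (simp_all add: top.not_eq_extremum)
  have "integral\<^sup>L M u = enn2real (\<integral>\<^sup>+x. u x \<partial>M) - enn2real (\<integral>\<^sup>+x. ennreal (- u x) \<partial>M)"
    using uM by (rule real_lebesgue_integral_def)
  also have "\<dots> = integral\<^sup>L N u + (a * max 0 (u p) - a * max 0 (- u p))"
    using mu finite a by (simp add: nn real_lebesgue_integral_def[OF u] enn2real_plus)
  also have "a * max 0 (u p) - a * max 0 (- u p) = a * u p"
    by (simp add: max_def algebra_simps)
  finally show ?thesis .
qed

lemma north_in_S2: "north \<in> S2"
  by (simp add: S2_def north_def norm_Pair)

lemma compact_S2: "compact S2"
  by (simp add: S2_def)

lemma space_borelS2: "space borelS2 = S2"
  by (simp add: borelS2_def space_restrict_space)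

lemma mem_S2_iff: "(p, q, t) \<in> S2 \<longleftrightarrow> p\<^sup>2 + q\<^sup>2 + t\<^sup>2 = 1"
  by (simp add: S2_def norm_Pair add.assoc)

lemma sph_in_S2: "sph z \<in> S2"
proof -
  define n where "n = (cmod z)\<^sup>2"
  have n: "n = (Re z)\<^sup>2 + (Im z)\<^sup>2" "1 + n > 0"
    by (simp_all add: n_def cmod_power2 add_pos_nonneg)
  have "(2 * Re z)\<^sup>2 + (2 * Im z)\<^sup>2 + (n - 1)\<^sup>2 = (1 + n)\<^sup>2"
    by (simp add: n(1) power2_eq_square algebra_simps)
  with n(2) show ?thesis
    unfolding sph_def mem_S2_iff n_def[symmetric]
    by (simp add: power_divide add.commute[of n] add_divide_distrib[symmetric])
qed

lemma sph_neq_north: "sph z \<noteq> north"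
proof -
  have "(cmod z)\<^sup>2 + 1 > 0" by (simp add: add_nonneg_pos)
  then show ?thesis by (simp add: sph_def north_def)
qed

lemma chart_sph: "chart (sph z) = z"
proof -
  define n where "n = (cmod z)\<^sup>2"
  have n: "1 + n > 0" by (simp add: n_def add_pos_nonneg)
  then have "1 - (n - 1) / (n + 1) = 2 / (1 + n)"
    by (simp add: field_simps)
  with n show ?thesis
    unfolding chart_def sph_def n_def[symmetric]
    by (simp add: complex_eq_iff Re_divide_of_real Im_divide_of_real del: of_real_diff)
qed

lemma S2_third_less_one:
  assumes "y \<in> S2" "y \<noteq> north"
  shows "snd (snd y) < 1"
proof -
  obtain p q t where y: "y = (p, q, t)" by (cases y)
  have sphere: "p\<^sup>2 + q\<^sup>2 = (1 - t) * (1 + t)"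
    using assms(1) by (simp add: y mem_S2_iff algebra_simps power2_eq_square)
  have "t \<noteq> 1"
    using sphere assms(2) by (auto simp: y north_def add_nonneg_eq_0_iff)
  with sphere show ?thesis
    by (simp add: y) (smt (verit) sum_power2_ge_zero zero_le_mult_iff)
qed

lemma sph_chart:
  assumes "y \<in> S2" "y \<noteq> north"
  shows "sph (chart y) = y"
proof -
  obtain p q t where y: "y = (p, q, t)" by (cases y)
  have sphere: "p\<^sup>2 + q\<^sup>2 = (1 - t) * (1 + t)"
    using assms(1) by (simp add: y mem_S2_iff algebra_simps power2_eq_square)
  have t: "1 - t > 0"
    using S2_third_less_one[OF assms] by (simp add: y)
  have chart: "chart y = Complex (p / (1 - t)) (q / (1 - t))"
    using t by (simp add: y chart_def complex_eq_iff Re_divide_of_real Im_divide_of_real)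
  have "(cmod (chart y))\<^sup>2 = (1 + t) / (1 - t)"
    using t by (simp add: chart cmod_power2 power_divide add_divide_distrib[symmetric] sphere
                     power2_eq_square[of "1 - t"])
  then have "sph (chart y) = (2 * (p / (1 - t)) / (1 + (1 + t) / (1 - t)),
      2 * (q / (1 - t)) / (1 + (1 + t) / (1 - t)), ((1 + t) / (1 - t) - 1) / ((1 + t) / (1 - t) + 1))"
    by (simp only: sph_def chart complex.sel)
  also have "\<dots> = y"
    using t by (simp add: y field_simps)
  finally show ?thesis .
qed

lemma dist_sph_north: "(dist (sph z) north)\<^sup>2 = 4 / (1 + (cmod z)\<^sup>2)"
proof -
  define n where "n = (cmod z)\<^sup>2"
  have n: "n = (Re z)\<^sup>2 + (Im z)\<^sup>2" "1 + n > 0"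
    by (simp_all add: n_def cmod_power2 add_pos_nonneg)
  have "(n - 1) / (n + 1) - 1 = - 2 / (1 + n)"
    using n(2) by (simp add: field_simps)
  then have "(dist (sph z) north)\<^sup>2 = ((2 * Re z)\<^sup>2 + (2 * Im z)\<^sup>2 + 4) / (1 + n)\<^sup>2"
    unfolding sph_def north_def n_def[symmetric]
    by (simp add: dist_norm norm_Pair power_divide add_divide_distrib add.commute[of n])
  also have "(2 * Re z)\<^sup>2 + (2 * Im z)\<^sup>2 + 4 = 4 * (1 + n)"
    by (simp add: n(1) power2_eq_square algebra_simps)
  also have "4 * (1 + n) / (1 + n)\<^sup>2 = 4 / (1 + n)"
    using n(2) by (simp add: power2_eq_square del: distrib_left_numeral)
  finally show ?thesis
    by (simp only: n_def)
qed

lemma continuous_on_sph: "continuous_on UNIV sph"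
proof -
  have "1 + (cmod z)\<^sup>2 \<noteq> 0" "(cmod z)\<^sup>2 + 1 \<noteq> 0" for z
    by (simp_all add: add_pos_nonneg add_nonneg_pos less_imp_neq[symmetric])
  then show ?thesis
    unfolding sph_def by (intro continuous_intros) auto
qed

lemma continuous_on_chart: "continuous_on (S2 - {north}) chart"
proof -
  have "1 - snd (snd y) \<noteq> 0" if "y \<in> S2 - {north}" for y
    using that S2_third_less_one[of y] by auto
  then show ?thesis
    unfolding chart_def Complex_eq by (intro continuous_intros) auto
qed

lemma filterlim_sph_at_infinity: "filterlim sph (at north within (S2 - {north})) at_infinity"
proof (rule filterlim_at_withinI)
  show "(sph \<longlongrightarrow> north) at_infinity"
  proof (rule tendstoI)
    fix e :: real assume e: "e > 0"
    have "dist (sph z) north < e" if "cmod z \<ge> 2 / e + 1" for z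
    proof -
      have "2 / e < cmod z" using that by simp
      then have "(2 / e)\<^sup>2 < (cmod z)\<^sup>2"
        using e by (intro power_strict_mono) auto
      then have "4 < (cmod z)\<^sup>2 * e\<^sup>2"
        using e by (simp add: power_divide divide_less_eq)
      then have "4 / (1 + (cmod z)\<^sup>2) < e\<^sup>2"
        by (simp add: add_pos_nonneg divide_less_eq algebra_simps add_strict_increasing2)
      then show ?thesis
        using e by (simp add: dist_sph_north[symmetric] power_less_imp_less_base)
    qed
    then show "\<forall>\<^sub>F z in at_infinity. dist (sph z) north < e"
      unfolding eventually_at_infinity by blast
  qed
  show "\<forall>\<^sub>F z in at_infinity. sph z \<in> S2 - {north} - {north}"
    by (simp add: sph_in_S2 sph_neq_north)
qed

lemma transcendental_entire_no_limit_at_infinity: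
  assumes "transcendental_entire f"
  shows "\<not> (f \<longlongrightarrow> l) at_infinity"
proof
  have holf: "f holomorphic_on UNIV"
    using assms by (simp add: transcendental_entire_def)
  assume "(f \<longlongrightarrow> l) at_infinity"
  then have "\<forall>z. f z = poly [:l:] z"
    using Liouville_weak[OF holf] by simp
  with assms show False
    unfolding transcendental_entire_def by blast
qed

lemma transcendental_entire_no_pole_at_infinity:
  assumes "transcendental_entire f"
  shows "\<not> ((inverse \<circ> f) \<longlongrightarrow> l) at_infinity"
proof
  have holf: "f holomorphic_on UNIV"
    using assms by (simp add: transcendental_entire_def)
  assume "((inverse \<circ> f) \<longlongrightarrow> l) at_infinity"
  then obtain a n where "\<And>z. f z = (\<Sum>i\<le>n. a i * z ^ i)"
    using pole_at_infinity[OF holf] by blast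
  then have "\<forall>z. f z = poly (\<Sum>i\<le>n. monom (a i) i) z"
    by (simp add: poly_sum poly_monom)
  with assms show False
    unfolding transcendental_entire_def by blast
qed

lemma transcendental_entire_frequently_in_open:
  assumes f: "transcendental_entire f" and U: "open U" "U \<noteq> {}"
  shows "\<exists>\<^sub>F z in at_infinity. f z \<in> U"
proof -
  have holf: "f holomorphic_on UNIV"
    using f by (simp add: transcendental_entire_def)
  define h where "h = f \<circ> inverse"
  have hol: "h holomorphic_on (UNIV - {0})"
    unfolding h_def by (rule holomorphic_on_compose) (auto intro!: holomorphic_intros holomorphic_on_subset[OF holf])
  have no_limit: "\<not> (h \<longlongrightarrow> l) (at 0)" and no_pole: "\<not> ((inverse \<circ> h) \<longlongrightarrow> l) (at 0)" for l
    using transcendental_entire_no_limit_at_infinity[OF f] transcendental_entire_no_pole_at_infinity[OF f]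
    by (simp_all add: at_to_infinity filterlim_filtermap h_def o_def)
  show ?thesis
    unfolding frequently_def eventually_at_infinity
  proof
    assume "\<exists>R. \<forall>z. R \<le> cmod z \<longrightarrow> f z \<notin> U"
    then obtain R0 where R0: "\<And>z. R0 \<le> cmod z \<Longrightarrow> f z \<notin> U"
      by blast
    define R where "R = max R0 1"
    have R: "R > 0" "\<And>z. R \<le> cmod z \<Longrightarrow> f z \<notin> U"
      using R0 by (auto simp: R_def)
    have "closure (h ` (ball 0 (inverse R) - {0})) = UNIV"
      using R(1) by (intro Casorati_Weierstrass no_limit no_pole holomorphic_on_subset[OF hol]) auto
    then have "U \<inter> h ` (ball 0 (inverse R) - {0}) \<noteq> {}"
      using U open_Int_closure_eq_empty[OF U(1)] by auto
    then obtain w where w: "w \<in> ball 0 (inverse R) - {0}" "h w \<in> U"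
      by blast
    then have "R * cmod w < 1" "cmod w > 0"
      using R(1) by (auto simp: field_simps)
    then have "R \<le> cmod (inverse w)"
      by (simp add: inverse_eq_divide norm_divide le_divide_eq less_imp_le)
    with R(2) w(2) show False by (simp add: h_def)
  qed
qed

lemma muX_upper: "continuous_on S2 \<phi> \<Longrightarrow> x \<in> S2 \<Longrightarrow> \<phi> x \<le> muX \<phi>"
  unfolding muX_def
  by (intro cSup_upper imageI bounded_imp_bdd_above compact_imp_bounded compact_continuous_image compact_S2)

lemma muX_attained:
  assumes "continuous_on S2 \<phi>"
  obtains p where "p \<in> S2" "\<phi> p = muX \<phi>"
proof -
  have "compact (\<phi> ` S2)" "\<phi> ` S2 \<noteq> {}"
    using assms compact_S2 north_in_S2 by (auto intro: compact_continuous_image)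
  then have "muX \<phi> \<in> \<phi> ` S2"
    unfolding muX_def by (rule compact_attains_sup[THEN bexE]) (metis cSup_eq_maximum)
  with that show ?thesis by (metis imageE)
qed

lemma muX_const: "muX (\<lambda>_. c) = c"
proof -
  have "S2 \<noteq> {}" using north_in_S2 by blast
  then show ?thesis by (simp add: muX_def)
qed

lemma frequently_pullback_gt:
  assumes f: "transcendental_entire f" and \<phi>: "continuous_on S2 \<phi>" and r: "r < muX \<phi>"
  shows "\<exists>\<^sub>F z in at_infinity. r < \<phi> (sph (f z))"
proof -
  define U where "U = {w. r < \<phi> (sph w)}"
  have cont: "continuous_on UNIV (\<phi> \<circ> sph)"
    using continuous_on_compose[OF continuous_on_sph] \<phi> continuous_on_subset sph_in_S2
    by (metis image_subsetI)
  then have "open U"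
    unfolding U_def using open_Collect_less[OF continuous_on_const cont] by simp
  moreover have "U \<noteq> {}"
  proof -
    obtain p where p: "p \<in> S2" "\<phi> p = muX \<phi>"
      using muX_attained[OF \<phi>] .
    show ?thesis
    proof (cases "p = north")
      case True
      have "(\<phi> \<longlongrightarrow> \<phi> north) (at north within S2 - {north})"
        using \<phi> north_in_S2 by (auto simp: continuous_on_def intro: tendsto_within_subset)
      then have "((\<lambda>z. \<phi> (sph z)) \<longlongrightarrow> \<phi> north) at_infinity"
        by (rule filterlim_compose[OF _ filterlim_sph_at_infinity])
      then have "\<forall>\<^sub>F z in at_infinity. r < \<phi> (sph z)"
        using r p True by (auto dest: order_tendstoD)
      then show ?thesis
        unfolding U_def by (auto dest: eventually_happens'[OF trivial_limit_at_infinity])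
    next
      case False
      then have "chart p \<in> U"
        using p r by (simp add: U_def sph_chart)
      then show ?thesis by blast
    qed
  qed
  ultimately have "\<exists>\<^sub>F z in at_infinity. f z \<in> U"
    by (rule transcendental_entire_frequently_in_open[OF f])
  then show ?thesis
    by (simp add: U_def)
qed

lemma pullback_off_north: "x \<noteq> north \<Longrightarrow> pullback f \<phi> x = \<phi> (sph (f (chart x)))"
  by (simp add: pullback_def)

lemma pullback_north:
  assumes f: "transcendental_entire f" and \<phi>: "continuous_on S2 \<phi>"
  shows "pullback f \<phi> north = muX \<phi>"
proof -
  define F where "F = at north within (S2 - {north})"
  define X where "X = (\<lambda>y. ereal (\<phi> (sph (f (chart y)))))"
  have "Limsup F X \<le> ereal (muX \<phi>)"
    by (rule Limsup_bounded) (simp add: X_def muX_upper[OF \<phi>] sph_in_S2)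
  moreover have "ereal (muX \<phi>) \<le> Limsup F X"
  proof (rule ccontr)
    assume "\<not> ereal (muX \<phi>) \<le> Limsup F X"
    then have "Limsup F X < ereal (muX \<phi>)"
      by (simp add: not_le)
    from ereal_dense2[OF this] obtain r where r: "Limsup F X < ereal r" "ereal r < ereal (muX \<phi>)"
      by blast
    then have "r < muX \<phi>" by simp
    have "\<forall>\<^sub>F y in F. X y < ereal r"
      using Limsup_lessD[OF r(1)] .
    then have "\<forall>\<^sub>F z in at_infinity. X (sph z) < ereal r"
      unfolding F_def by (rule filterlim_iff[THEN iffD1, OF filterlim_sph_at_infinity, rule_format])
    then have "\<forall>\<^sub>F z in at_infinity. \<not> r < \<phi> (sph (f z))"
      by (rule eventually_mono) (simp add: X_def chart_sph)
    with frequently_pullback_gt[OF f \<phi> \<open>r < muX \<phi>\<close>] show False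
      by (simp add: frequently_def)
  qed
  ultimately have "Limsup F X = ereal (muX \<phi>)"
    by simp
  then show ?thesis
    unfolding pullback_def F_def X_def by simp
qed

lemma pullback_le_muX:
  assumes "transcendental_entire f" "continuous_on S2 \<phi>" "x \<in> S2"
  shows "pullback f \<phi> x \<le> muX \<phi>"
proof (cases "x = north")
  case True
  then show ?thesis using pullback_north[OF assms(1,2)] by simp
next
  case False
  then show ?thesis using muX_upper[OF assms(2) sph_in_S2] by (simp add: pullback_off_north)
qed

lemma continuous_on_pullback:
  assumes f: "continuous_on UNIV f" and \<phi>: "continuous_on S2 \<phi>"
  shows "continuous_on (S2 - {north}) (pullback f \<phi>)"
proof -
  have "continuous_on (S2 - {north}) (\<lambda>x. \<phi> (sph (f (chart x))))"
    by (intro continuous_on_compose2[OF \<phi> continuous_on_compose2[OF continuous_on_sph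
          continuous_on_compose2[OF f continuous_on_chart]]]) (auto simp: sph_in_S2)
  then show ?thesis
    by (rule continuous_on_cong[THEN iffD1, rotated 2]) (auto simp: pullback_off_north)
qed

lemma pullback_in_image:
  assumes "transcendental_entire f" "continuous_on S2 \<phi>" "x \<in> S2"
  shows "pullback f \<phi> x \<in> \<phi> ` S2"
proof (cases "x = north")
  case True
  obtain p where "p \<in> S2" "\<phi> p = muX \<phi>"
    using muX_attained[OF assms(2)] .
  with True show ?thesis
    using pullback_north[OF assms(1,2)] by (metis image_eqI)
next
  case False
  then show ?thesis
    using sph_in_S2 by (simp add: pullback_off_north)
qed

lemma pushforward_eq_muX:
  assumes f: "transcendental_entire f" and \<phi>: "continuous_on S2 \<phi>"
    and const: "\<And>c. \<mu> (\<lambda>_. c) = c" and at_north: "\<And>\<psi>. continuous_on S2 \<psi> \<Longrightarrow> \<psi> north \<le> \<mu> \<psi>"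
  shows "pushforward \<mu> f \<phi> = muX \<phi>"
  unfolding pushforward_def
proof (rule cInf_eq_minimum)
  show "muX \<phi> \<in> {\<mu> \<psi> |\<psi>. continuous_on S2 \<psi> \<and> (\<forall>x\<in>S2. pullback f \<phi> x \<le> \<psi> x)}"
    using const[of "muX \<phi>"] pullback_le_muX[OF f \<phi>] by (intro CollectI exI[of _ "\<lambda>_. muX \<phi>"]) auto
next
  fix s assume "s \<in> {\<mu> \<psi> |\<psi>. continuous_on S2 \<psi> \<and> (\<forall>x\<in>S2. pullback f \<phi> x \<le> \<psi> x)}"
  then obtain \<psi> where "s = \<mu> \<psi>" "continuous_on S2 \<psi>" "pullback f \<phi> north \<le> \<psi> north"
    using north_in_S2 by blast
  then show "muX \<phi> \<le> s"
    using at_north pullback_north[OF f \<phi>] by fastforce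
qed

lemma
  assumes f: "transcendental_entire f" and \<phi>: "continuous_on S2 \<phi>"
    and M: "finite_measure M" "sets M = sets borelS2"
  shows integrable_pullback: "integrable M (pullback f \<phi>)"
    and pushforward_integral: "pushforward (\<lambda>\<psi>. integral\<^sup>L M \<psi>) f \<phi> = integral\<^sup>L M (pullback f \<phi>)"
proof -
  have cont: "continuous_on (S2 - {north}) (pullback f \<phi>)"
    using f \<phi> by (intro continuous_on_pullback holomorphic_on_imp_continuous_on)
      (simp add: transcendental_entire_def)
  have "bounded (\<phi> ` S2)"
    using \<phi> compact_S2 by (intro compact_imp_bounded compact_continuous_image)
  then obtain B where B: "\<And>x. x \<in> S2 \<Longrightarrow> norm (pullback f \<phi> x) \<le> B"
    using pullback_in_image[OF f \<phi>] unfolding bounded_iff by blast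
  have "pullback f \<phi> \<in> borel_measurable M"
    using borel_measurable_continuous_off_point[OF _ cont] M(2)
    by (subst measurable_cong_sets[OF M(2)[unfolded borelS2_def] refl]) (simp add: compact_S2 compact_imp_closed)
  then show "integrable M (pullback f \<phi>)"
    using B sets_eq_imp_space_eq[OF M(2)] space_borelS2
    by (intro finite_measure.integrable_const_bound[OF M(1), where B=B] AE_I2) auto
  have "bdd_below (pullback f \<phi> ` S2)"
    using B by (force intro!: bdd_belowI[where m="- B"] simp: abs_le_iff)
  then show "pushforward (\<lambda>\<psi>. integral\<^sup>L M \<psi>) f \<phi> = integral\<^sup>L M (pullback f \<phi>)"
    unfolding pushforward_def
    using M(2) pullback_le_muX[OF f \<phi>] pullback_north[OF f \<phi>]
    by (intro Inf_integral_continuous_majorants[OF compact_S2 north_in_S2 M(1) _ cont])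
      (auto simp: borelS2_def)
qed

lemma set_integral_pullback:
  assumes M: "sets M = sets borelS2" "emeasure M {north} = 0"
    and mG: "pullback f \<phi> \<in> borel_measurable M"
  shows "(\<integral>x \<in> S2 - {north}. \<phi> (sph (f (chart x))) \<partial>M) = integral\<^sup>L M (pullback f \<phi>)"
proof -
  have space: "space M = S2"
    using sets_eq_imp_space_eq[OF M(1)] space_borelS2 by simp
  have north_sets: "{north} \<in> sets M"
    unfolding M(1) borelS2_def sets_restrict_space using north_in_S2
    by (auto intro!: image_eqI[of _ _ "{north}"])
  have "(\<lambda>x. indicator (S2 - {north}) x *\<^sub>R \<phi> (sph (f (chart x))))
      = (\<lambda>x. indicator (S2 - {north}) x *\<^sub>R pullback f \<phi> x)"
    by (auto simp: pullback_off_north split: split_indicator)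
  moreover have "AE x in M. indicator (S2 - {north}) x *\<^sub>R pullback f \<phi> x = pullback f \<phi> x"
    by (rule AE_I'[of "{north}"]) (use north_sets M(2) in \<open>auto simp: space split: split_indicator\<close>)
  then have "(\<integral>x. indicator (S2 - {north}) x *\<^sub>R pullback f \<phi> x \<partial>M) = integral\<^sup>L M (pullback f \<phi>)"
    by (rule integral_cong_AE[rotated 2])
      (use mG sets.Diff[OF sets.top north_sets] space in \<open>auto intro!: borel_measurable_times borel_measurable_indicator\<close>)
  ultimately show ?thesis
    unfolding set_lebesgue_integral_def by simp
qed

lemma pushforward_return_north:
  assumes "transcendental_entire f" "continuous_on S2 \<phi>"
  shows "pushforward (\<lambda>\<psi>. integral\<^sup>L (return borelS2 north) \<psi>) f \<phi> = muX \<phi>"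
proof (rule pushforward_eq_muX[OF assms])
  have north_space: "north \<in> space borelS2"
    by (simp add: space_borelS2 north_in_S2)
  show "integral\<^sup>L (return borelS2 north) (\<lambda>_. c) = c" for c :: real
    by (rule integral_return[OF north_space]) simp
  show "\<psi> north \<le> integral\<^sup>L (return borelS2 north) \<psi>" if "continuous_on S2 \<psi>" for \<psi> :: "R3 \<Rightarrow> real"
    using integral_return[OF north_space borel_measurable_continuous_on_restrict[OF that, folded borelS2_def]]
    by simp
qed

lemma pushforward_muX:
  assumes "transcendental_entire f" "continuous_on S2 \<phi>"
  shows "pushforward muX f \<phi> = muX \<phi>"
  using north_in_S2 by (intro pushforward_eq_muX[OF assms] muX_const muX_upper)

lemma pushforward_add_point_mass:
  assumes f: "transcendental_entire f" and \<phi>: "continuous_on S2 \<phi>"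
    and M: "finite_measure M" "sets M = sets borelS2"
    and M0: "finite_measure M0" "sets M0 = sets borelS2" "emeasure M0 {north} = 0"
    and a: "a \<ge> 0" and decomp: "\<forall>A \<in> sets M. emeasure M A = emeasure M0 A + ennreal a * indicator A north"
  shows "pushforward (\<lambda>\<psi>. integral\<^sup>L M \<psi>) f \<phi>
      = (\<integral>x \<in> S2 - {north}. \<phi> (sph (f (chart x))) \<partial>M0) + a * muX \<phi>"
    and "pushforward (\<lambda>\<psi>. integral\<^sup>L M \<psi>) f \<phi>
      = pushforward (\<lambda>\<psi>. integral\<^sup>L M0 \<psi>) f \<phi> + a * muX \<phi>"
proof -
  have sets: "sets M = sets M0"
    using M(2) M0(2) by simp
  have "north \<in> space M0"
    using sets_eq_imp_space_eq[OF M0(2)] space_borelS2 north_in_S2 by simp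
  then have "integral\<^sup>L M (pullback f \<phi>) = integral\<^sup>L M0 (pullback f \<phi>) + a * pullback f \<phi> north"
    using decomp sets by (intro integral_add_point_mass[OF sets _ a _ integrable_pullback[OF f \<phi> M0(1,2)]]) auto
  then have push: "pushforward (\<lambda>\<psi>. integral\<^sup>L M \<psi>) f \<phi> = integral\<^sup>L M0 (pullback f \<phi>) + a * muX \<phi>"
    by (simp add: pushforward_integral[OF f \<phi> M] pullback_north[OF f \<phi>])
  then show "pushforward (\<lambda>\<psi>. integral\<^sup>L M \<psi>) f \<phi>
      = (\<integral>x \<in> S2 - {north}. \<phi> (sph (f (chart x))) \<partial>M0) + a * muX \<phi>"
    using integrable_pullback[OF f \<phi> M0(1,2)] by (simp add: set_integral_pullback[OF M0(2,3)])
  from push show "pushforward (\<lambda>\<psi>. integral\<^sup>L M \<psi>) f \<phi>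
      = pushforward (\<lambda>\<psi>. integral\<^sup>L M0 \<psi>) f \<phi> + a * muX \<phi>"
    by (simp add: pushforward_integral[OF f \<phi> M0(1,2)])
qed

theorem mainTheorem17:
  fixes f :: "complex \<Rightarrow> complex"
  assumes "transcendental_entire f"
  shows "(\<forall>\<phi>. continuous_on S2 \<phi> \<longrightarrow>
            pushforward (\<lambda>\<psi>. integral\<^sup>L (return borelS2 north) \<psi>) f \<phi> = muX \<phi>)
       \<and> (\<forall>\<phi>. continuous_on S2 \<phi> \<longrightarrow> pushforward muX f \<phi> = muX \<phi>)
       \<and> (\<forall>M M0 a \<phi>. finite_measure M \<and> sets M = sets borelS2
            \<and> finite_measure M0 \<and> sets M0 = sets borelS2
            \<and> emeasure M0 {north} = 0 \<and> a \<ge> 0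
            \<and> (\<forall>A \<in> sets M. emeasure M A = emeasure M0 A + ennreal a * indicator A north)
            \<and> continuous_on S2 \<phi> \<longrightarrow>
              pushforward (\<lambda>\<psi>. integral\<^sup>L M \<psi>) f \<phi>
                = (\<integral>x \<in> S2 - {north}. \<phi> (sph (f (chart x))) \<partial>M0) + a * muX \<phi>
            \<and> pushforward (\<lambda>\<psi>. integral\<^sup>L M \<psi>) f \<phi>
                = pushforward (\<lambda>\<psi>. integral\<^sup>L M0 \<psi>) f \<phi> + a * muX \<phi>)"
  using pushforward_return_north[OF assms] pushforward_muX[OF assms]
    pushforward_add_point_mass[OF assms]
  by blast

end
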